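(* Let $n>m\ge3$, and let $\mathbb{K}$, its $W_{m,n}$-action and the field $\mathcal{L}=\mathbb{K}(f_1,\dots,f_m;\tau_1,\dots,\tau_n)$ be as in the context. Define automorphisms $s_0,\dots,s_{n-1}$ of $\mathcal{L}$ extending the given action on $\mathbb{K}$ by: $s_0(\tau_j)=\tau_jf_j$ ($1\le j\le m$), $s_0(\tau_j)=\tau_j$ ($m+1\le j\le n$), $s_k(\tau_j)=\tau_{s_k(j)}$ ($1\le k\le n-1$, $1\le j\le n$), where $s_k(j)$ is the image of $j$ under the transposition $(k,k+1)$; $s_0(f_i)=1/f_i$; $s_k(f_i)=f_{s_k(i)}$ for $1\le k\le m-1$; $s_k(f_i)=f_i$ for $m+1\le k\le n-1$; $$s_m(f_i)=\frac{\tau_m}{\tau_{m+1}}\cdot\frac{[\alpha_0+\varepsilon_{m,m+1}][\varepsilon_{i,m+1}]f_i-[\alpha_0+\varepsilon_{i,m+1}][\varepsilon_{m,m+1}]f_m}{[\alpha_0][\varepsilon_{i,m}]}\quad(1\le i\le m-1),\qquad s_m(f_m)=\frac{\tau_m}{\tau_{m+1}}f_m.$$ Then $s_0,\dots,s_{n-1}$ satisfy the fundamental relations of the simple reflections of $W_{m,n}$: $s_i^2=1$; $s_is_j=s_js_i$ if nodes $i,j$ are not joined; $s_is_js_i=s_js_is_j$ if nodes $i,j$ are joined in the tree $T_{2,m,n-m}$.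
   Context: $[x]$ is a fixed nonzero odd holomorphic function on $\mathbb{C}$ satisfying the Riemann relation $[x+y][x-y][u+v][u-v]=[x+u][x-u][y+v][y-v]-[x+v][x-v][y+u][y-u]$ for all $x,y,u,v\in\mathbb{C}$. $\mathfrak{h}=\bigoplus_{j=0}^n\mathbb{C}e_j$ with symmetric form $\langle e_0,e_0\rangle=-(m-2)$, $\langle e_j,e_j\rangle=1$ ($1\le j\le n$), $\langle e_i,e_j\rangle=0$ ($i\ne j$); $\varepsilon_j=\langle e_j,\cdot\rangle\in\mathfrak{h}^*$, $\varepsilon_{i,j}=\varepsilon_i-\varepsilon_j$. Simple coroots $h_0=e_0-e_1-\dots-e_m$, $h_k=e_k-e_{k+1}$ ($1\le k\le n-1$); simple roots $\alpha_k=\langle h_k,\cdot\rangle$, so $\alpha_0=\varepsilon_0-\varepsilon_1-\dots-\varepsilon_m$. The tree $T_{2,m,n-m}$ has nodes $0,\dots,n-1$, with $1-2-\dots-(n-1)$ a chain and node $0$ joined to node $m$. $W_{m,n}$ is the Coxeter group on $s_0,\dots,s_{n-1}$ for this tree; it acts on $\mathfrak{h}^*$ by $s_k.\lambda=\lambda-\langle h_k,\lambda\rangle\alpha_k$. Real roots: $\Delta=W_{m,n}\{\alpha_0,\dots,\alpha_{n-1}\}$. For $\alpha\in\mathfrak{h}^*$, $[\alpha]$ denotes the function $h\mapsto[\alpha(h)]$ on $\mathfrak{h}$. $\mathbb{K}$ is the field of meromorphic functions on $\mathfrak{h}$ generated over $\mathbb{C}$ by $[\alpha]$, $\alpha\in\Delta$;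 $W_{m,n}$ acts on $\mathbb{K}$ by field automorphisms with $w([\alpha])=[w.\alpha]$. $\mathcal{L}$ is the field of rational functions in indeterminates $f_1,\dots,f_m,\tau_1,\dots,\tau_n$ over $\mathbb{K}$. *)

theory Defs
  imports "HOL-Analysis.Analysis"
begin

text \<open>
  A point of h is a coordinate vector h = sum_{j=0..n} h_j e_j, stored as
  nat => complex (coordinates j > n are unused).  An element of the field
  L = K(f_1..f_m, tau_1..tau_n) is a meromorphic function of (h, f, tau).  The automorphism
  s_k of L (extending g |-> g o s_k on K and given on generators by rational expressions R)
  acts by pull-back along the rational map Phi_k (h,f,tau) = (s_k h, R(h,f,tau)); hence a
  word relation among the s_k holds in L iff the corresponding composite of the maps Phi_k
  agrees (wherever it is defined) with the composite on the other side.
\<close>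

type_synonym point = "(nat \<Rightarrow> complex) \<times> (nat \<Rightarrow> complex) \<times> (nat \<Rightarrow> complex)"

definition form :: "nat \<Rightarrow> nat \<Rightarrow> (nat \<Rightarrow> complex) \<Rightarrow> (nat \<Rightarrow> complex) \<Rightarrow> complex" where
  "form m n v w = - (of_nat m - 2) * v 0 * w 0 + (\<Sum>j\<in>{1..n}. v j * w j)"

definition basis_e :: "nat \<Rightarrow> nat \<Rightarrow> complex" where
  "basis_e i = (\<lambda>j. if j = i then 1 else 0)"

definition eps :: "nat \<Rightarrow> nat \<Rightarrow> nat \<Rightarrow> (nat \<Rightarrow> complex) \<Rightarrow> complex" where
  "eps m n j h = form m n (basis_e j) h"

definition eps2 :: "nat \<Rightarrow> nat \<Rightarrow> nat \<Rightarrow> nat \<Rightarrow> (nat \<Rightarrow> complex) \<Rightarrow> complex" where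
  "eps2 m n i j h = eps m n i h - eps m n j h"

definition coroot :: "nat \<Rightarrow> nat \<Rightarrow> nat \<Rightarrow> complex" where
  "coroot m k = (if k = 0 then (\<lambda>j. if j = 0 then 1 else if 1 \<le> j \<and> j \<le> m then -1 else 0)
                 else (\<lambda>j. if j = k then 1 else if j = k + 1 then -1 else 0))"

definition sroot :: "nat \<Rightarrow> nat \<Rightarrow> nat \<Rightarrow> (nat \<Rightarrow> complex) \<Rightarrow> complex" where
  "sroot m n k h = form m n (coroot m k) h"

text \<open>The (orthogonal, involutive) reflection s_k on h; [alpha](s_k h) = [s_k.alpha](h).\<close>
definition refl_h :: "nat \<Rightarrow> nat \<Rightarrow> nat \<Rightarrow> (nat \<Rightarrow> complex) \<Rightarrow> (nat \<Rightarrow> complex)" where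
  "refl_h m n k h = (\<lambda>j. h j - sroot m n k h * coroot m k j)"

definition sw :: "nat \<Rightarrow> nat \<Rightarrow> nat" where
  "sw k j = (if j = k then k + 1 else if j = k + 1 then k else j)"

definition fm :: "(complex \<Rightarrow> complex) \<Rightarrow> nat \<Rightarrow> nat \<Rightarrow> point \<Rightarrow> nat \<Rightarrow> complex" where
  "fm br m n p i = (case p of (h, f, \<tau>) \<Rightarrow>
     if 1 \<le> i \<and> i < m then
       \<tau> m / \<tau> (m + 1) *
       ((br (sroot m n 0 h + eps2 m n m (m + 1) h) * br (eps2 m n i (m + 1) h) * f i
         - br (sroot m n 0 h + eps2 m n i (m + 1) h) * br (eps2 m n m (m + 1) h) * f m)
        / (br (sroot m n 0 h) * br (eps2 m n i m h)))
     else if i = m then \<tau> m / \<tau> (m + 1) * f m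
     else f i)"

text \<open>The rational map Phi_k dual to s_k; None where a denominator vanishes.\<close>
definition Phi :: "(complex \<Rightarrow> complex) \<Rightarrow> nat \<Rightarrow> nat \<Rightarrow> nat \<Rightarrow> point \<Rightarrow> point option" where
  "Phi br m n k p = (case p of (h, f, \<tau>) \<Rightarrow>
     if k = 0 then
       (if (\<forall>i\<in>{1..m}. f i \<noteq> 0) then
          Some (refl_h m n 0 h,
                (\<lambda>i. if i \<in> {1..m} then 1 / f i else f i),
                (\<lambda>j. if j \<in> {1..m} then \<tau> j * f j else \<tau> j))
        else None)
     else if k = m then
       (if \<tau> (m + 1) \<noteq> 0 \<and> br (sroot m n 0 h) \<noteq> 0 \<and> (\<forall>i\<in>{1..<m}. br (eps2 m n i m h) \<noteq> 0) then
          Some (refl_h m n m h, fm br m n p, \<tau> \<circ> sw m)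
        else None)
     else Some (refl_h m n k h, (if k < m then f \<circ> sw k else f), \<tau> \<circ> sw k))"

text \<open>Composite map for a word [k1,...,kr]: apply Phi_k1 first, then Phi_k2, ...
  (corresponding to the automorphism s_k1 s_k2 ... s_kr of L).\<close>
fun actW :: "(nat \<Rightarrow> point \<Rightarrow> point option) \<Rightarrow> nat list \<Rightarrow> point \<Rightarrow> point option" where
  "actW \<Phi> [] p = Some p"
| "actW \<Phi> (k # ks) p = Option.bind (\<Phi> k p) (actW \<Phi> ks)"

definition joined :: "nat \<Rightarrow> nat \<Rightarrow> nat \<Rightarrow> nat \<Rightarrow> bool" where
  "joined m n i j \<longleftrightarrow> i < n \<and> j < n \<and>
     ((1 \<le> i \<and> j = i + 1) \<or> (1 \<le> j \<and> i = j + 1) \<or> (i = 0 \<and> j = m) \<or> (i = m \<and> j = 0))"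

definition rel_holds :: "(nat \<Rightarrow> point \<Rightarrow> point option) \<Rightarrow> nat list \<Rightarrow> nat list \<Rightarrow> bool" where
  "rel_holds \<Phi> w1 w2 \<longleftrightarrow> (\<forall>p q r. actW \<Phi> w1 p = Some q \<longrightarrow> actW \<Phi> w2 p = Some r \<longrightarrow> q = r)"

end

theory Submission
  imports Defs
begin

text \<open>
  On \<open>h\<close> the maps are
  the orthogonal reflections in the simple coroots, and their relations follow from the Cartan
  matrix of \<open>T\<^sub>2\<^sub>,\<^sub>m\<^sub>,\<^sub>n\<^sub>-\<^sub>m\<close>. On \<open>f\<close> and \<open>\<tau>\<close>, the \<open>s\<^sub>k\<close> with \<open>k \<noteq> 0, m\<close> permute indices,
  \<open>s\<^sub>0\<close> inverts \<open>f\<^sub>1, \<dots>, f\<^sub>m\<close> and rescales \<open>\<tau>\<close>, and \<open>s\<^sub>m\<close> acts on \<open>(f\<^sub>1, \<dots>, f\<^sub>m)\<close> as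
  \<open>\<tau>\<^sub>m/\<tau>\<^sub>m\<^sub>+\<^sub>1\<close> times a linear map whose coefficients are products of values of \<open>[\<cdot>]\<close>.
  So every relation involving \<open>s\<^sub>m\<close> reduces to an identity between these coefficients:
  \<open>s\<^sub>m\<^sup>2 = 1\<close> and the braid relation with \<open>s\<^sub>m\<^sub>-\<^sub>1\<close> need only the oddness of \<open>[\<cdot>]\<close>;
  the braid relation with \<open>s\<^sub>0\<close> reduces to \<open>s\<^sub>m\<^sup>2 = 1\<close>, because conjugating by \<open>f \<mapsto> 1/f\<close>
  turns the coefficients at \<open>s\<^sub>0 h\<close> back into those at \<open>h\<close>; and the braid relation with
  \<open>s\<^sub>m\<^sub>+\<^sub>1\<close> is exactly a three-term form of the Riemann relation.
\<close>

section \<open>Cartan matrix and reflections\<close>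

lemma form_sym: "form m n v w = form m n w v"
  unfolding form_def by (simp add: mult.commute)

lemma form_diff_right: "form m n v (\<lambda>j. h j - c * w j) = form m n v h - c * form m n v w"
  unfolding form_def by (simp add: algebra_simps sum_subtractf sum_distrib_left)

lemma eps_eq:
  assumes "1 \<le> j" "j \<le> n"
  shows "eps m n j h = h j"
proof -
  have "(\<Sum>i\<in>{1..n}. basis_e j i * h i) = (\<Sum>i\<in>{1..n}. if i = j then h i else 0)"
    by (rule sum.cong) (auto simp: basis_e_def)
  also have "\<dots> = h j" using assms by simp
  finally show ?thesis using assms unfolding eps_def form_def by (simp add: basis_e_def)
qed

lemma eps2_eq: "1 \<le> i \<Longrightarrow> i \<le> n \<Longrightarrow> 1 \<le> j \<Longrightarrow> j \<le> n \<Longrightarrow> eps2 m n i j h = h i - h j"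
  by (simp add: eps2_def eps_eq)

lemma form_coroot_left:
  assumes "1 \<le> k" "k < n"
  shows "form m n (coroot m k) w = w k - w (k + 1)"
proof -
  have "(\<Sum>j\<in>{1..n}. coroot m k j * w j)
      = (\<Sum>j\<in>{1..n}. if j = k then w j else 0) - (\<Sum>j\<in>{1..n}. if j = k + 1 then w j else 0)"
    unfolding sum_subtractf[symmetric] using assms by (intro sum.cong) (auto simp: coroot_def)
  then show ?thesis using assms unfolding form_def by (simp add: coroot_def)
qed

lemma form_coroot0_coroot0:
  assumes "m \<le> n"
  shows "form m n (coroot m 0) (coroot m 0) = 2"
proof -
  have "(\<Sum>j\<in>{1..n}. coroot m 0 j * coroot m 0 j) = (\<Sum>j\<in>{1..n}. if j \<le> m then 1 else 0)"
    by (rule sum.cong) (auto simp: coroot_def)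
  also have "\<dots> = (\<Sum>j\<in>{1..m}. 1)"
    using assms by (intro sum.mono_neutral_cong_right) auto
  finally show ?thesis unfolding form_def by (simp add: coroot_def)
qed

lemma form_coroot_coroot:
  assumes "i < n" "j < n" "1 \<le> m" "m < n"
  shows "form m n (coroot m i) (coroot m j) = (if i = j then 2 else if joined m n i j then -1 else 0)"
proof -
  have k0: "form m n (coroot m k) (coroot m 0) = (if k = m then -1 else 0)" if "1 \<le> k" "k < n" for k
    using that by (simp add: form_coroot_left, auto simp: coroot_def)
  then have "form m n (coroot m 0) (coroot m k) = (if k = m then -1 else 0)" if "1 \<le> k" "k < n" for k
    using that k0 by (metis form_sym)
  moreover have "i \<noteq> 0 \<Longrightarrow> j \<noteq> 0 \<Longrightarrow> ?thesis"
    using assms by (simp add: form_coroot_left) (auto simp: coroot_def joined_def)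
  ultimately show ?thesis
    using k0 assms form_coroot0_coroot0[of m n] by (cases "i = 0"; cases "j = 0") (auto simp: joined_def)
qed

definition reflect :: "nat \<Rightarrow> nat \<Rightarrow> (nat \<Rightarrow> complex) \<Rightarrow> (nat \<Rightarrow> complex) \<Rightarrow> nat \<Rightarrow> complex" where
  "reflect m n c h = (\<lambda>j. h j - form m n c h * c j)"

lemma form_reflect: "form m n v (reflect m n c h) = form m n v h - form m n c h * form m n v c"
  unfolding reflect_def by (rule form_diff_right)

lemma reflect_reflect: "form m n c c = 2 \<Longrightarrow> reflect m n c (reflect m n c h) = h"
  unfolding reflect_def form_diff_right by (rule ext) (simp add: algebra_simps)

lemma reflect_commute:
  "form m n c d = 0 \<Longrightarrow> reflect m n c (reflect m n d h) = reflect m n d (reflect m n c h)"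
  unfolding reflect_def form_diff_right by (rule ext) (simp add: form_sym[of m n d c] algebra_simps)

lemma reflect_braid:
  assumes "form m n c c = 2" "form m n d d = 2" "form m n c d = -1"
  shows "reflect m n c (reflect m n d (reflect m n c h)) = reflect m n d (reflect m n c (reflect m n d h))"
  unfolding reflect_def form_diff_right using assms form_sym[of m n d c] by (intro ext) (simp add: algebra_simps)

lemma refl_h_eq_reflect: "refl_h m n k h = reflect m n (coroot m k) h"
  by (simp add: refl_h_def reflect_def sroot_def)

lemma refl_h_involutive:
  "k < n \<Longrightarrow> 1 \<le> m \<Longrightarrow> m < n \<Longrightarrow> refl_h m n k (refl_h m n k h) = h"
  unfolding refl_h_eq_reflect by (rule reflect_reflect) (simp add: form_coroot_coroot)

lemma refl_h_commute:
  "i < n \<Longrightarrow> j < n \<Longrightarrow> 1 \<le> m \<Longrightarrow> m < n \<Longrightarrow> i \<noteq> j \<Longrightarrow> \<not> joined m n i j \<Longrightarrow>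
    refl_h m n i (refl_h m n j h) = refl_h m n j (refl_h m n i h)"
  unfolding refl_h_eq_reflect by (rule reflect_commute) (simp add: form_coroot_coroot)

lemma refl_h_braid:
  "i < n \<Longrightarrow> j < n \<Longrightarrow> 1 \<le> m \<Longrightarrow> m < n \<Longrightarrow> joined m n i j \<Longrightarrow>
    refl_h m n i (refl_h m n j (refl_h m n i h)) = refl_h m n j (refl_h m n i (refl_h m n j h))"
  unfolding refl_h_eq_reflect by (rule reflect_braid) (auto simp: form_coroot_coroot joined_def)

lemma sw_sw: "sw k (sw k j) = j"
  by (simp add: sw_def)

lemma sw_commute: "k + 1 < l \<or> l + 1 < k \<Longrightarrow> sw k (sw l j) = sw l (sw k j)"
  by (auto simp: sw_def)

lemma sw_braid: "sw k (sw (k + 1) (sw k j)) = sw (k + 1) (sw k (sw (k + 1) j))"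
  by (auto simp: sw_def)

lemma refl_h_eq_comp_sw: "1 \<le> k \<Longrightarrow> k < n \<Longrightarrow> refl_h m n k h = h \<circ> sw k"
  by (rule ext) (simp add: refl_h_def sroot_def form_coroot_left, auto simp: coroot_def sw_def)

lemma refl_h_0_apply:
  "refl_h m n 0 h j = (if 1 \<le> j \<and> j \<le> m then h j + sroot m n 0 h else if j = 0 then h 0 - sroot m n 0 h else h j)"
  by (simp add: refl_h_def coroot_def)

lemma sroot_0_refl_h_0: "m \<le> n \<Longrightarrow> sroot m n 0 (refl_h m n 0 h) = - sroot m n 0 h"
  by (simp add: sroot_def refl_h_eq_reflect form_reflect form_coroot0_coroot0)

lemma sroot_0_comp_sw:
  assumes "1 \<le> k" "k < n" "1 \<le> m" "m < n"
  shows "sroot m n 0 (h \<circ> sw k) = (if k = m then sroot m n 0 h + (h m - h (m + 1)) else sroot m n 0 h)"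
proof -
  have "sroot m n 0 (h \<circ> sw k) = sroot m n 0 h - sroot m n k h * form m n (coroot m 0) (coroot m k)"
    using assms refl_h_eq_comp_sw[of k n m h, symmetric] by (simp add: sroot_def refl_h_eq_reflect form_reflect)
  then show ?thesis
    using assms form_coroot_coroot[of 0 n k m] by (simp add: sroot_def form_coroot_left joined_def)
qed

section \<open>The coefficients of \<open>s\<^sub>m(f\<^sub>i)\<close>\<close>

text \<open>\<open>sm_lincomb br a xi xm xl fi fp\<close> is \<open>(\<tau>\<^sub>m\<^sub>+\<^sub>1/\<tau>\<^sub>m) s\<^sub>m(f\<^sub>i)\<close> (\<open>1 \<le> i < m\<close>) at \<open>a = \<alpha>\<^sub>0(h)\<close>,
  \<open>xi = h\<^sub>i\<close>, \<open>xm = h\<^sub>m\<close>, \<open>xl = h\<^sub>m\<^sub>+\<^sub>1\<close>, \<open>fi = f\<^sub>i\<close>, \<open>fp = f\<^sub>m\<close>.\<close>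

definition sm_lincomb ::
    "(complex \<Rightarrow> complex) \<Rightarrow> complex \<Rightarrow> complex \<Rightarrow> complex \<Rightarrow> complex \<Rightarrow> complex \<Rightarrow> complex \<Rightarrow> complex" where
  "sm_lincomb br a xi xm xl fi fp =
     (br (a + (xm - xl)) * br (xi - xl) * fi - br (a + (xi - xl)) * br (xm - xl) * fp) / (br a * br (xi - xm))"

lemma odd_fun_diff:
  fixes br :: "complex \<Rightarrow> complex"
  assumes "\<forall>x. br (- x) = - br x"
  shows "br (y - x) = - br (x - y)"
  using assms minus_diff_eq by metis

lemma sm_lincomb_scale: "sm_lincomb br a xi xm xl (c * u / d) (c * v / d) = c * sm_lincomb br a xi xm xl u v / d"
  unfolding sm_lincomb_def by (simp add: diff_divide_distrib[symmetric] right_diff_distrib[symmetric] ac_simps)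

lemma sm_lincomb_swap:
  assumes "\<forall>x. br (- x) = - br x"
  shows "sm_lincomb br a xm xi xl v u = sm_lincomb br a xi xm xl u v"
  unfolding sm_lincomb_def odd_fun_diff[OF assms, where y = xm and x = xi]
  by (simp add: minus_divide_left)

lemma sm_lincomb_involution:
  assumes odd: "\<forall>x. br (- x) = - br x"
    and "br a \<noteq> 0" "br (xi - xm) \<noteq> 0" "br (a + (xm - xl)) \<noteq> 0" "br (xi - xl) \<noteq> 0"
  shows "sm_lincomb br (a + (xm - xl)) xi xl xm (sm_lincomb br a xi xm xl fi fp) fp = fi"
proof -
  have "a + (xm - xl) + (xl - xm) = a" "a + (xm - xl) + (xi - xm) = a + (xi - xl)" by simp_all
  then show ?thesis
    using assms odd_fun_diff[OF odd, of xm xl] by (simp add: sm_lincomb_def field_simps)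
qed

lemma sm_lincomb_inverse:
  assumes odd: "\<forall>x. br (- x) = - br x" and "fi \<noteq> 0" "fp \<noteq> 0"
  shows "sm_lincomb br (- a) (xi + a) (xm + a) xl (1 / fi) (1 / fp) = sm_lincomb br a xi xm xl fi fp / (fi * fp)"
proof -
  have "- a + (xm + a - xl) = xm - xl" "- a + (xi + a - xl) = xi - xl" "xi + a - (xm + a) = xi - xm"
    "xm + a - xl = a + (xm - xl)" "xi + a - xl = a + (xi - xl)" by simp_all
  then show ?thesis
    using assms by (cases "br a = 0"; cases "br (xi - xm) = 0") (simp_all add: sm_lincomb_def field_simps)
qed

lemma sm_lincomb_braid:
  assumes "br a \<noteq> 0" "br (a + (xm - xl)) \<noteq> 0" "br (xi - xm) \<noteq> 0" "br (xk - xm) \<noteq> 0" "br (xi - xk) \<noteq> 0"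
  shows "sm_lincomb br (a + (xm - xl)) xi xk xm (sm_lincomb br a xi xm xl fi fp) (sm_lincomb br a xk xm xl fk fp)
    = sm_lincomb br a xi xk xl fi fk"
proof -
  have "a + (xm - xl) + (xk - xm) = a + (xk - xl)" "a + (xm - xl) + (xi - xm) = a + (xi - xl)" by simp_all
  then show ?thesis
    using assms by (simp add: sm_lincomb_def field_simps)
qed

definition riemann_relation :: "(complex \<Rightarrow> complex) \<Rightarrow> bool" where
  "riemann_relation br \<longleftrightarrow> (\<forall>x y u v. br (x + y) * br (x - y) * br (u + v) * br (u - v)
     = br (x + u) * br (x - u) * br (y + v) * br (y - v) - br (x + v) * br (x - v) * br (y + u) * br (y - u))"

lemma riemann_three_term:
  assumes "riemann_relation br"
  shows "br (a + (q - s)) * br (p - s) * br (a + (p - r)) * br (q - r)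
       + br (a + (q - r) + (p - s)) * br (r - s) * br a * br (p - q)
       = br (a + (p - s)) * br (q - s) * br (a + (q - r)) * br (p - r)"
proof -
  define x where "x = a + (p + q - r - s) / 2"
  define y where "y = (p + q - r - s) / 2"
  define u where "u = (r - s + p - q) / 2"
  define v where "v = (r - s - p + q) / 2"
  have e: "x + y = a + (q - r) + (p - s)" "x - y = a" "u + v = r - s" "u - v = p - q"
    "x + u = a + (p - s)" "x - u = a + (q - r)" "y + v = q - s" "y - v = p - r"
    "x + v = a + (q - s)" "x - v = a + (p - r)" "y + u = p - s" "y - u = q - r"
    unfolding x_def y_def u_def v_def by (simp_all add: field_simps)
  have "br (x + y) * br (x - y) * br (u + v) * br (u - v)
      = br (x + u) * br (x - u) * br (y + v) * br (y - v) - br (x + v) * br (x - v) * br (y + u) * br (y - u)"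
    using assms unfolding riemann_relation_def by blast
  then show ?thesis unfolding e by (simp add: algebra_simps)
qed

lemma sm_lincomb_riemann:
  assumes riemann: "riemann_relation br"
    and "br a \<noteq> 0" "br (xi - xm) \<noteq> 0" "br (a + (xm - xl)) \<noteq> 0" "br (xi - xl) \<noteq> 0"
  shows "sm_lincomb br (a + (xm - xl)) xi xl xr (sm_lincomb br a xi xm xl fi fp) fp = sm_lincomb br a xi xm xr fi fp"
proof -
  have "a + (xm - xl) + (xl - xr) = a + (xm - xr)" by simp
  then show ?thesis
    using assms(2-) riemann_three_term[OF riemann, of a xm xr xi xl]
    unfolding sm_lincomb_def by (simp add: field_simps) algebra
qed

section \<open>The action of \<open>s\<^sub>m\<close> on the \<open>f\<close>-variables\<close>

lemma fm_eq_sm_lincomb: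
  "1 \<le> i \<Longrightarrow> i < m \<Longrightarrow> m < n \<Longrightarrow>
    fm br m n (h, f, \<tau>) i = \<tau> m / \<tau> (m + 1) * sm_lincomb br (sroot m n 0 h) (h i) (h m) (h (m + 1)) (f i) (f m)"
  by (simp add: fm_def sm_lincomb_def eps2_eq)

lemma fm_pivot: "1 \<le> m \<Longrightarrow> fm br m n (h, f, \<tau>) m = \<tau> m / \<tau> (m + 1) * f m"
  by (simp add: fm_def)

lemma fm_outside: "1 \<le> m \<Longrightarrow> i = 0 \<or> m < i \<Longrightarrow> fm br m n (h, f, \<tau>) i = f i"
  by (auto simp: fm_def)

lemma index_cases:
  fixes i m :: nat
  obtains (outside) "i = 0 \<or> m < i" | (below) "1 \<le> i" "i < m" | (pivot) "i = m"
  by linarith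

lemma fm_comp_sw:
  assumes "1 \<le> k" "k < n" "k + 1 < m \<or> m + 1 < k" "1 \<le> m" "m < n"
  shows "fm br m n (h \<circ> sw k, if k < m then f \<circ> sw k else f, \<tau> \<circ> sw k)
       = (if k < m then fm br m n (h, f, \<tau>) \<circ> sw k else fm br m n (h, f, \<tau>))"
proof
  fix i
  have sw: "sw k m = m" "sw k (m + 1) = m + 1" using assms by (auto simp: sw_def)
  show "fm br m n (h \<circ> sw k, if k < m then f \<circ> sw k else f, \<tau> \<circ> sw k) i
      = (if k < m then fm br m n (h, f, \<tau>) \<circ> sw k else fm br m n (h, f, \<tau>)) i"
  proof (cases rule: index_cases[of i m])
    case outside
    then have "sw k i = i \<or> m < k" using assms by (auto simp: sw_def)
    with outside assms show ?thesis by (auto simp: fm_outside)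
  next
    case below
    moreover have "1 \<le> sw k i" "sw k i < m" if "k < m" using below that assms by (auto simp: sw_def)
    moreover have "sw k i = i" if "m < k" using below that by (auto simp: sw_def)
    ultimately show ?thesis
      using assms sw by (auto simp: fm_eq_sm_lincomb sroot_0_comp_sw)
  next
    case pivot
    with assms sw show ?thesis by (simp add: fm_pivot)
  qed
qed

lemma fm_involutive:
  assumes "1 \<le> m" "m < n" and odd: "\<forall>x. br (- x) = - br x"
    and "\<tau> m \<noteq> 0" "\<tau> (m + 1) \<noteq> 0" "br (sroot m n 0 h) \<noteq> 0" "br (sroot m n 0 h + (h m - h (m + 1))) \<noteq> 0"
    and "\<forall>i\<in>{1..<m}. br (h i - h m) \<noteq> 0 \<and> br (h i - h (m + 1)) \<noteq> 0"
  shows "fm br m n (h \<circ> sw m, fm br m n (h, f, \<tau>), \<tau> \<circ> sw m) = f"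
proof
  fix i
  show "fm br m n (h \<circ> sw m, fm br m n (h, f, \<tau>), \<tau> \<circ> sw m) i = f i"
  proof (cases rule: index_cases[of i m])
    case below
    with assms show ?thesis
      by (simp add: fm_eq_sm_lincomb fm_pivot sroot_0_comp_sw sw_def sm_lincomb_scale sm_lincomb_involution)
  qed (use assms in \<open>auto simp: fm_outside fm_pivot sw_def\<close>)
qed

lemma fm_braid_pred:
  assumes "m = Suc k" "1 \<le> k" "m < n" and odd: "\<forall>x. br (- x) = - br x"
    and "\<tau> m \<noteq> 0" "\<tau> (m + 1) \<noteq> 0" "br (sroot m n 0 h) \<noteq> 0" "br (sroot m n 0 h + (h m - h (m + 1))) \<noteq> 0"
    and "\<forall>i\<in>{1..<m}. br (h i - h m) \<noteq> 0" "\<forall>i\<in>{1..<k}. br (h i - h k) \<noteq> 0" "br (h k - h (m + 1)) \<noteq> 0"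
  shows "fm br m n (h \<circ> sw k, f \<circ> sw k, \<tau> \<circ> sw k) \<circ> sw k
       = fm br m n (h \<circ> sw m \<circ> sw k, fm br m n (h, f, \<tau>) \<circ> sw k, \<tau> \<circ> sw m \<circ> sw k)"
proof
  fix i
  have sw: "sw k k = m" "sw k m = k" "sw m m = Suc m" "sw m (Suc m) = m" "sw k (Suc m) = Suc m" "sw m k = k"
    using assms by (auto simp: sw_def)
  have km: "k < m" "1 \<le> m" using assms by auto
  consider "i = 0 \<or> m < i" | "1 \<le> i" "i < k" | "i = k" | "i = m" using assms by linarith
  then show "(fm br m n (h \<circ> sw k, f \<circ> sw k, \<tau> \<circ> sw k) \<circ> sw k) i
      = fm br m n (h \<circ> sw m \<circ> sw k, fm br m n (h, f, \<tau>) \<circ> sw k, \<tau> \<circ> sw m \<circ> sw k) i"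
  proof cases
    case 1
    with assms show ?thesis by (auto simp: fm_outside sw_def)
  next
    case 2
    then have "sw k i = i" "sw m i = i" using assms by (auto simp: sw_def)
    with 2 km assms(2-) show ?thesis
      by (simp add: fm_eq_sm_lincomb sroot_0_comp_sw sw sm_lincomb_scale sm_lincomb_braid)
  next
    case 3
    with km assms(2-) show ?thesis
      by (simp add: fm_eq_sm_lincomb fm_pivot sroot_0_comp_sw sw sm_lincomb_scale sm_lincomb_involution
          sm_lincomb_swap[OF odd, where xm = "h (Suc m)" and xi = "h k"])
  next
    case 4
    with km assms(2-) show ?thesis
      by (simp add: fm_eq_sm_lincomb fm_pivot sroot_0_comp_sw sw sm_lincomb_swap[OF odd, where xm = "h m" and xi = "h k"])
  qed
qed

lemma fm_braid_succ:
  assumes "1 \<le> m" "m + 1 < n" and riemann: "riemann_relation br"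
    and "\<tau> (m + 1) \<noteq> 0" "br (sroot m n 0 h) \<noteq> 0" "br (sroot m n 0 h + (h m - h (m + 1))) \<noteq> 0"
    and "\<forall>i\<in>{1..<m}. br (h i - h m) \<noteq> 0 \<and> br (h i - h (m + 1)) \<noteq> 0"
  shows "fm br m n (h \<circ> sw m \<circ> sw (m + 1), fm br m n (h, f, \<tau>), \<tau> \<circ> sw m \<circ> sw (m + 1))
       = fm br m n (h \<circ> sw (m + 1), f, \<tau> \<circ> sw (m + 1))"
proof
  fix i
  show "fm br m n (h \<circ> sw m \<circ> sw (m + 1), fm br m n (h, f, \<tau>), \<tau> \<circ> sw m \<circ> sw (m + 1)) i
      = fm br m n (h \<circ> sw (m + 1), f, \<tau> \<circ> sw (m + 1)) i"
  proof (cases rule: index_cases[of i m])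
    case below
    with assms show ?thesis
      by (simp add: fm_eq_sm_lincomb fm_pivot sroot_0_comp_sw sw_def sm_lincomb_scale sm_lincomb_riemann[OF riemann])
  qed (use assms in \<open>auto simp: fm_outside fm_pivot sw_def\<close>)
qed

definition s0_f :: "nat \<Rightarrow> (nat \<Rightarrow> complex) \<Rightarrow> nat \<Rightarrow> complex" where
  "s0_f m f = (\<lambda>i. if i \<in> {1..m} then 1 / f i else f i)"

definition s0_tau :: "nat \<Rightarrow> (nat \<Rightarrow> complex) \<Rightarrow> (nat \<Rightarrow> complex) \<Rightarrow> nat \<Rightarrow> complex" where
  "s0_tau m f \<tau> = (\<lambda>j. if j \<in> {1..m} then \<tau> j * f j else \<tau> j)"

lemma fm_s0:
  assumes "1 \<le> i" "i \<le> m" "m < n" and odd: "\<forall>x. br (- x) = - br x" and "f i \<noteq> 0" "f m \<noteq> 0"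
  shows "fm br m n (refl_h m n 0 h, s0_f m f, s0_tau m f \<tau>) i = fm br m n (h, f, \<tau>) i / f i"
proof (cases "i = m")
  case False
  with assms have "fm br m n (refl_h m n 0 h, s0_f m f, s0_tau m f \<tau>) i
      = \<tau> m * f m / \<tau> (m + 1) * (sm_lincomb br (sroot m n 0 h) (h i) (h m) (h (m + 1)) (f i) (f m) / (f i * f m))"
    by (simp add: fm_eq_sm_lincomb refl_h_0_apply sroot_0_refl_h_0 sm_lincomb_inverse s0_f_def s0_tau_def)
  with False assms show ?thesis by (simp add: fm_eq_sm_lincomb)
qed (use assms in \<open>simp add: fm_pivot s0_f_def s0_tau_def\<close>)

lemma Phi_0_eq_Some:
  "Phi br m n 0 (h, f, \<tau>) = Some p \<longleftrightarrow>
     (\<forall>i\<in>{1..m}. f i \<noteq> 0) \<and> p = (refl_h m n 0 h, s0_f m f, s0_tau m f \<tau>)"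
  by (auto simp: Phi_def s0_f_def s0_tau_def)

lemma Phi_m_eq_Some:
  "1 \<le> m \<Longrightarrow> m < n \<Longrightarrow> Phi br m n m (h, f, \<tau>) = Some p \<longleftrightarrow>
     \<tau> (m + 1) \<noteq> 0 \<and> br (sroot m n 0 h) \<noteq> 0 \<and> (\<forall>i\<in>{1..<m}. br (h i - h m) \<noteq> 0) \<and>
     p = (h \<circ> sw m, fm br m n (h, f, \<tau>), \<tau> \<circ> sw m)"
  by (auto simp: Phi_def eps2_eq refl_h_eq_comp_sw)

lemma Phi_sw:
  "1 \<le> k \<Longrightarrow> k < n \<Longrightarrow> k \<noteq> m \<Longrightarrow>
     Phi br m n k (h, f, \<tau>) = Some (h \<circ> sw k, if k < m then f \<circ> sw k else f, \<tau> \<circ> sw k)"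
  by (simp add: Phi_def refl_h_eq_comp_sw)

lemma rel_holdsI:
  assumes "\<And>h f \<tau> q r. actW \<Phi> w1 (h, f, \<tau>) = Some q \<Longrightarrow> actW \<Phi> w2 (h, f, \<tau>) = Some r \<Longrightarrow> q = r"
  shows "rel_holds \<Phi> w1 w2"
  unfolding rel_holds_def using assms by (metis prod_cases3)

lemma rel_holds_sym: "rel_holds \<Phi> w1 w2 \<Longrightarrow> rel_holds \<Phi> w2 w1"
  unfolding rel_holds_def by metis

lemma rel_holds_0_0:
  assumes "1 \<le> m" "m < n"
  shows "rel_holds (Phi br m n) [0, 0] []"
proof (rule rel_holdsI)
  fix h f \<tau> q r
  assume "actW (Phi br m n) [0, 0] (h, f, \<tau>) = Some q" "actW (Phi br m n) [] (h, f, \<tau>) = Some r"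
  then show "q = r"
    using assms by (auto simp: bind_eq_Some_conv Phi_0_eq_Some refl_h_involutive fun_eq_iff s0_f_def s0_tau_def)
qed

lemma rel_holds_sw_sw:
  assumes "1 \<le> k" "k < n" "k \<noteq> m"
  shows "rel_holds (Phi br m n) [k, k] []"
proof (rule rel_holdsI)
  fix h f \<tau> q r
  assume "actW (Phi br m n) [k, k] (h, f, \<tau>) = Some q" "actW (Phi br m n) [] (h, f, \<tau>) = Some r"
  then show "q = r"
    using assms by (auto simp: Phi_sw comp_def sw_sw)
qed

lemma rel_holds_m_m:
  assumes "1 \<le> m" "m < n" and odd: "\<forall>x. br (- x) = - br x"
  shows "rel_holds (Phi br m n) [m, m] []"
proof (rule rel_holdsI)
  fix h f \<tau> q r
  assume "actW (Phi br m n) [m, m] (h, f, \<tau>) = Some q" "actW (Phi br m n) [] (h, f, \<tau>) = Some r"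
  then have "q = (h \<circ> sw m \<circ> sw m, fm br m n (h \<circ> sw m, fm br m n (h, f, \<tau>), \<tau> \<circ> sw m), \<tau> \<circ> sw m \<circ> sw m)"
    and "r = (h, f, \<tau>)"
    and "fm br m n (h \<circ> sw m, fm br m n (h, f, \<tau>), \<tau> \<circ> sw m) = f"
    using assms by (auto simp: bind_eq_Some_conv Phi_m_eq_Some sroot_0_comp_sw sw_def intro!: fm_involutive)
  then show "q = r" by (simp add: comp_def sw_sw)
qed

lemma rel_holds_0_sw:
  assumes "1 \<le> k" "k < n" "k \<noteq> m" "1 \<le> m" "m < n"
  shows "rel_holds (Phi br m n) [0, k] [k, 0]"
proof (rule rel_holdsI)
  fix h f \<tau> q r
  assume "actW (Phi br m n) [0, k] (h, f, \<tau>) = Some q" "actW (Phi br m n) [k, 0] (h, f, \<tau>) = Some r"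
  moreover define f' where "f' = (if k < m then f \<circ> sw k else f)"
  ultimately have "q = (refl_h m n 0 h \<circ> sw k, if k < m then s0_f m f \<circ> sw k else s0_f m f, s0_tau m f \<tau> \<circ> sw k)"
    and "r = (refl_h m n 0 (h \<circ> sw k), s0_f m f', s0_tau m f' (\<tau> \<circ> sw k))"
    using assms by (auto simp: bind_eq_Some_conv Phi_0_eq_Some Phi_sw f'_def)
  moreover have "(if k < m then s0_f m f \<circ> sw k else s0_f m f) = s0_f m f'"
    and "s0_tau m f \<tau> \<circ> sw k = s0_tau m f' (\<tau> \<circ> sw k)"
    using assms by (auto simp: fun_eq_iff s0_f_def s0_tau_def f'_def sw_def)
  moreover have "refl_h m n 0 (h \<circ> sw k) = refl_h m n 0 h \<circ> sw k"
    using assms refl_h_commute[of 0 n k m h] by (simp add: refl_h_eq_comp_sw joined_def)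
  ultimately show "q = r" by simp
qed

lemma rel_holds_sw_commute:
  assumes "1 \<le> k" "k < n" "k \<noteq> m" "1 \<le> l" "l < n" "l \<noteq> m" "k + 1 < l \<or> l + 1 < k"
  shows "rel_holds (Phi br m n) [k, l] [l, k]"
proof (rule rel_holdsI)
  fix h f \<tau> q r
  assume "actW (Phi br m n) [k, l] (h, f, \<tau>) = Some q" "actW (Phi br m n) [l, k] (h, f, \<tau>) = Some r"
  then show "q = r"
    using assms sw_commute[OF assms(7)] by (auto simp: Phi_sw comp_def)
qed

lemma rel_holds_m_sw:
  assumes "1 \<le> k" "k < n" "k + 1 < m \<or> m + 1 < k" "1 \<le> m" "m < n"
  shows "rel_holds (Phi br m n) [m, k] [k, m]"
proof (rule rel_holdsI)
  fix h f \<tau> q r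
  assume "actW (Phi br m n) [m, k] (h, f, \<tau>) = Some q" "actW (Phi br m n) [k, m] (h, f, \<tau>) = Some r"
  moreover have "k \<noteq> m" using assms by auto
  ultimately have "q = (h \<circ> sw m \<circ> sw k, if k < m then fm br m n (h, f, \<tau>) \<circ> sw k else fm br m n (h, f, \<tau>),
                        \<tau> \<circ> sw m \<circ> sw k)"
    and "r = (h \<circ> sw k \<circ> sw m, fm br m n (h \<circ> sw k, if k < m then f \<circ> sw k else f, \<tau> \<circ> sw k), \<tau> \<circ> sw k \<circ> sw m)"
    using assms by (auto simp: bind_eq_Some_conv Phi_m_eq_Some Phi_sw)
  moreover have "g \<circ> sw m \<circ> sw k = g \<circ> sw k \<circ> sw m" for g :: "nat \<Rightarrow> complex"
    using assms sw_commute[of k m] by (auto simp: fun_eq_iff)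
  ultimately show "q = r"
    using fm_comp_sw[OF assms] by simp
qed

lemma comp_sw_braid: "g \<circ> sw k \<circ> sw (k + 1) \<circ> sw k = g \<circ> sw (k + 1) \<circ> sw k \<circ> sw (k + 1)"
  using sw_braid[of k] by (simp add: fun_eq_iff)

lemma rel_holds_sw_braid:
  assumes "1 \<le> k" "k + 1 < n" "k \<noteq> m" "k + 1 \<noteq> m"
  shows "rel_holds (Phi br m n) [k, k + 1, k] [k + 1, k, k + 1]"
proof (rule rel_holdsI)
  fix h f \<tau> q r
  assume "actW (Phi br m n) [k, k + 1, k] (h, f, \<tau>) = Some q"
    "actW (Phi br m n) [k + 1, k, k + 1] (h, f, \<tau>) = Some r"
  moreover have "k < m \<longleftrightarrow> k + 1 < m" using assms by linarith
  ultimately show "q = r"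
    using assms sw_braid[of k] by (auto simp: Phi_sw comp_def)
qed

lemma rel_holds_pred_m_m:
  assumes "m = Suc k" "1 \<le> k" "m < n" and odd: "\<forall>x. br (- x) = - br x"
  shows "rel_holds (Phi br m n) [k, m, k] [m, k, m]"
proof (rule rel_holdsI)
  fix h f \<tau> q r
  assume "actW (Phi br m n) [k, m, k] (h, f, \<tau>) = Some q" "actW (Phi br m n) [m, k, m] (h, f, \<tau>) = Some r"
  then have q: "q = (h \<circ> sw k \<circ> sw m \<circ> sw k, fm br m n (h \<circ> sw k, f \<circ> sw k, \<tau> \<circ> sw k) \<circ> sw k,
      \<tau> \<circ> sw k \<circ> sw m \<circ> sw k)"
    and r: "r = (h \<circ> sw m \<circ> sw k \<circ> sw m,
      fm br m n (h \<circ> sw m \<circ> sw k, fm br m n (h, f, \<tau>) \<circ> sw k, \<tau> \<circ> sw m \<circ> sw k), \<tau> \<circ> sw m \<circ> sw k \<circ> sw m)"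
    and nz: "\<tau> m \<noteq> 0" "\<tau> (m + 1) \<noteq> 0" "br (sroot m n 0 h) \<noteq> 0" "br (sroot m n 0 h + (h m - h (m + 1))) \<noteq> 0"
      "\<forall>i\<in>{1..<m}. br (h i - h m) \<noteq> 0"
    and nz_k: "\<forall>i\<in>{1..<m}. br (h (sw k i) - h k) \<noteq> 0"
    and nz_mk: "\<forall>i\<in>{1..<m}. br (h (sw m (sw k i)) - h k) \<noteq> 0"
    using assms by (auto simp: bind_eq_Some_conv Phi_m_eq_Some Phi_sw sroot_0_comp_sw) (simp_all add: sw_def)
  have "\<forall>i\<in>{1..<k}. br (h i - h k) \<noteq> 0"
  proof
    fix i assume "i \<in> {1..<k}"
    with nz_k[rule_format, of i] assms(1) show "br (h i - h k) \<noteq> 0" by (simp add: sw_def)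
  qed
  moreover have "br (h k - h (m + 1)) \<noteq> 0"
    using nz_mk[rule_format, of k] assms odd_fun_diff[OF odd, of "h k" "h (m + 1)"] by (simp add: sw_def)
  ultimately have "fm br m n (h \<circ> sw k, f \<circ> sw k, \<tau> \<circ> sw k) \<circ> sw k
      = fm br m n (h \<circ> sw m \<circ> sw k, fm br m n (h, f, \<tau>) \<circ> sw k, \<tau> \<circ> sw m \<circ> sw k)"
    using assms nz by (intro fm_braid_pred) simp_all
  then show "q = r"
    using q r comp_sw_braid[of h k] comp_sw_braid[of \<tau> k] assms(1) by simp
qed

lemma rel_holds_m_Suc_m:
  assumes "1 \<le> m" "m + 1 < n" and riemann: "riemann_relation br"
  shows "rel_holds (Phi br m n) [m, m + 1, m] [m + 1, m, m + 1]"
proof (rule rel_holdsI)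
  fix h f \<tau> q r
  assume "actW (Phi br m n) [m, m + 1, m] (h, f, \<tau>) = Some q"
    "actW (Phi br m n) [m + 1, m, m + 1] (h, f, \<tau>) = Some r"
  then have "q = (h \<circ> sw m \<circ> sw (m + 1) \<circ> sw m,
      fm br m n (h \<circ> sw m \<circ> sw (m + 1), fm br m n (h, f, \<tau>), \<tau> \<circ> sw m \<circ> sw (m + 1)),
      \<tau> \<circ> sw m \<circ> sw (m + 1) \<circ> sw m)"
    and "r = (h \<circ> sw (m + 1) \<circ> sw m \<circ> sw (m + 1), fm br m n (h \<circ> sw (m + 1), f, \<tau> \<circ> sw (m + 1)),
      \<tau> \<circ> sw (m + 1) \<circ> sw m \<circ> sw (m + 1))"
    and "\<tau> (m + 1) \<noteq> 0" "br (sroot m n 0 h) \<noteq> 0" "br (sroot m n 0 h + (h m - h (m + 1))) \<noteq> 0"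
      "\<forall>i\<in>{1..<m}. br (h i - h m) \<noteq> 0 \<and> br (h i - h (m + 1)) \<noteq> 0"
    using assms by (auto simp: bind_eq_Some_conv Phi_m_eq_Some Phi_sw sroot_0_comp_sw sw_def)
  moreover from this(3-) have "fm br m n (h \<circ> sw m \<circ> sw (m + 1), fm br m n (h, f, \<tau>), \<tau> \<circ> sw m \<circ> sw (m + 1))
      = fm br m n (h \<circ> sw (m + 1), f, \<tau> \<circ> sw (m + 1))"
    by (rule fm_braid_succ[OF assms])
  ultimately show "q = r"
    using comp_sw_braid[of h m] comp_sw_braid[of \<tau> m] by simp
qed

lemma s0_tau_braid:
  assumes "1 \<le> m" "\<tau> (m + 1) \<noteq> 0" "\<forall>i\<in>{1..m}. f i \<noteq> 0" "\<And>i. i \<in> {1..m} \<Longrightarrow> f' i = F i / f i"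
    and "F m = \<tau> m / \<tau> (m + 1) * f m"
  shows "s0_tau m f' (s0_tau m f \<tau> \<circ> sw m) = s0_tau m F (\<tau> \<circ> sw m) \<circ> sw m"
proof
  fix j
  show "s0_tau m f' (s0_tau m f \<tau> \<circ> sw m) j = (s0_tau m F (\<tau> \<circ> sw m) \<circ> sw m) j"
    using assms assms(4)[of j] assms(4)[of m] by (auto simp: s0_tau_def sw_def)
qed

lemma rel_holds_0_m:
  assumes "1 \<le> m" "m < n" and odd: "\<forall>x. br (- x) = - br x"
  shows "rel_holds (Phi br m n) [0, m, 0] [m, 0, m]"
proof (rule rel_holdsI)
  fix h f \<tau> q r
  assume A: "actW (Phi br m n) [0, m, 0] (h, f, \<tau>) = Some q" and B: "actW (Phi br m n) [m, 0, m] (h, f, \<tau>) = Some r"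
  define F where "F = fm br m n (h, f, \<tau>)"
  define f2 where "f2 = fm br m n (refl_h m n 0 h, s0_f m f, s0_tau m f \<tau>)"
  define h' where "h' = refl_h m n 0 (h \<circ> sw m)"
  from A have q: "q = (refl_h m n 0 (refl_h m n 0 h \<circ> sw m), s0_f m f2, s0_tau m f2 (s0_tau m f \<tau> \<circ> sw m))"
    and nz_f: "\<forall>i\<in>{1..m}. f i \<noteq> 0"
    using assms by (auto simp: bind_eq_Some_conv Phi_0_eq_Some Phi_m_eq_Some f2_def)
  from B obtain p1 p2 where B1: "Phi br m n m (h, f, \<tau>) = Some p1" and B2: "Phi br m n 0 p1 = Some p2"
    and B3: "Phi br m n m p2 = Some r"
    by (auto simp: bind_eq_Some_conv)
  from B1 B2 have p2: "p2 = (h', s0_f m F, s0_tau m F (\<tau> \<circ> sw m))" and nz_F: "\<forall>i\<in>{1..m}. F i \<noteq> 0"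
    and nz1: "\<tau> (m + 1) \<noteq> 0" "br (sroot m n 0 h) \<noteq> 0" "\<forall>i\<in>{1..<m}. br (h i - h m) \<noteq> 0"
    using assms by (auto simp: Phi_m_eq_Some Phi_0_eq_Some F_def h'_def)
  have "br (- (sroot m n 0 h + (h m - h (m + 1)))) = - br (sroot m n 0 h + (h m - h (m + 1)))" using odd by blast
  with B3 have r: "r = (h' \<circ> sw m, fm br m n (h', s0_f m F, s0_tau m F (\<tau> \<circ> sw m)), s0_tau m F (\<tau> \<circ> sw m) \<circ> sw m)"
    and nz2: "\<tau> m \<noteq> 0" "br (sroot m n 0 h + (h m - h (m + 1))) \<noteq> 0" "\<forall>i\<in>{1..<m}. br (h i - h (m + 1)) \<noteq> 0"
    unfolding p2 using assms
    by (simp_all add: Phi_m_eq_Some h'_def s0_tau_def refl_h_0_apply sroot_0_refl_h_0 sroot_0_comp_sw sw_def)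
  have "fm br m n (h \<circ> sw m, F, \<tau> \<circ> sw m) = f"
    unfolding F_def using assms nz1 nz2 by (intro fm_involutive) simp_all
  then have G: "fm br m n (h', s0_f m F, s0_tau m F (\<tau> \<circ> sw m)) i = f i / F i" if "i \<in> {1..m}" for i
    using fm_s0[of i m n br F "h \<circ> sw m" "\<tau> \<circ> sw m"] assms odd nz_F that by (simp add: h'_def)
  have f2: "f2 i = F i / f i" if "i \<in> {1..m}" for i
    using fm_s0[of i m n br f h \<tau>] assms odd nz_f that by (simp add: f2_def F_def)
  have "s0_f m f2 = fm br m n (h', s0_f m F, s0_tau m F (\<tau> \<circ> sw m))"
  proof
    fix i
    show "s0_f m f2 i = fm br m n (h', s0_f m F, s0_tau m F (\<tau> \<circ> sw m)) i"
      using assms f2 G by (cases "i \<in> {1..m}") (auto simp: s0_f_def f2_def F_def fm_outside)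
  qed
  moreover have "s0_tau m f2 (s0_tau m f \<tau> \<circ> sw m) = s0_tau m F (\<tau> \<circ> sw m) \<circ> sw m"
    using assms nz1 nz_f f2 by (intro s0_tau_braid) (simp_all add: F_def fm_pivot)
  moreover have "refl_h m n 0 (refl_h m n 0 h \<circ> sw m) = h' \<circ> sw m"
    using assms refl_h_braid[of 0 n m m h] by (simp add: h'_def refl_h_eq_comp_sw joined_def)
  ultimately show "q = r" using q r by simp
qed

lemma rel_holds_involution:
  assumes "1 \<le> m" "m < n" "i < n" and odd: "\<forall>x. br (- x) = - br x"
  shows "rel_holds (Phi br m n) [i, i] []"
proof -
  consider "i = 0" | "i = m" | "1 \<le> i" "i \<noteq> m" by linarith
  then show ?thesis
    using assms rel_holds_0_0 rel_holds_m_m[OF _ _ odd] rel_holds_sw_sw by cases auto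
qed

lemma rel_holds_commute:
  assumes "1 \<le> m" "m < n" "i < n" "j < n" "i \<noteq> j" "\<not> joined m n i j"
  shows "rel_holds (Phi br m n) [i, j] [j, i]"
proof -
  have ordered: "rel_holds (Phi br m n) [i, j] [j, i]" if "i < j" "j < n" "\<not> joined m n i j" for i j
  proof -
    consider "i = 0" | "i = m" | "1 \<le> i" "i \<noteq> m" "j = m" | "1 \<le> i" "i \<noteq> m" "j \<noteq> m" by linarith
    then show ?thesis
    proof cases
      case 1
      then have "1 \<le> j" "j \<noteq> m" using that by (auto simp: joined_def)
      with 1 that assms(1,2) show ?thesis by (simp add: rel_holds_0_sw)
    next
      case 2
      then have "1 \<le> j" "m + 1 < j" using that assms(1) by (auto simp: joined_def)
      with 2 that assms(1,2) show ?thesis by (simp add: rel_holds_m_sw)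
    next
      case 3
      then have "i + 1 < m" using that by (auto simp: joined_def)
      with 3 that assms(1,2) show ?thesis by (simp add: rel_holds_sym rel_holds_m_sw)
    next
      case 4
      then have "i + 1 < j" using that by (auto simp: joined_def)
      with 4 that show ?thesis by (simp add: rel_holds_sw_commute)
    qed
  qed
  show ?thesis
  proof (cases "i < j")
    case True
    with assms ordered show ?thesis by simp
  next
    case False
    with assms have "j < i" "\<not> joined m n j i" by (auto simp: joined_def)
    with assms show ?thesis using rel_holds_sym[OF ordered[of j i]] by simp
  qed
qed

lemma rel_holds_braid:
  assumes "1 \<le> m" "m < n" "joined m n i j"
    and odd: "\<forall>x. br (- x) = - br x"
    and riemann: "riemann_relation br"
  shows "rel_holds (Phi br m n) [i, j, i] [j, i, j]"
proof -
  have chain: "rel_holds (Phi br m n) [k, k + 1, k] [k + 1, k, k + 1]" if "1 \<le> k" "k + 1 < n" for k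
  proof -
    consider "k + 1 = m" | "k = m" | "k + 1 \<noteq> m" "k \<noteq> m" by blast
    then show ?thesis
    proof cases
      case 1
      with that rel_holds_pred_m_m[OF _ _ _ odd, of m k n] show ?thesis by simp
    next
      case 2
      with that rel_holds_m_Suc_m[OF _ _ riemann] show ?thesis by simp
    next
      case 3
      with that rel_holds_sw_braid[of k n m br] show ?thesis by simp
    qed
  qed
  from assms(3) consider "i = 0" "j = m" | "i = m" "j = 0" | "1 \<le> i" "j = i + 1" "j < n" | "1 \<le> j" "i = j + 1" "i < n"
    unfolding joined_def by blast
  then show ?thesis
  proof cases
    case 1
    with rel_holds_0_m[OF assms(1,2) odd] show ?thesis by simp
  next
    case 2
    with rel_holds_sym[OF rel_holds_0_m[OF assms(1,2) odd]] show ?thesis by simp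
  next
    case 3
    with chain[of i] show ?thesis by simp
  next
    case 4
    with rel_holds_sym[OF chain[of j]] show ?thesis by simp
  qed
qed

theorem theorem3:
  fixes br :: "complex \<Rightarrow> complex" and m n :: nat
  assumes "3 \<le> m" and "m < n"
    and "br holomorphic_on UNIV"
    and "\<forall>x. br (- x) = - br x"
    and "\<exists>x. br x \<noteq> 0"
    and "\<forall>x y u v. br (x + y) * br (x - y) * br (u + v) * br (u - v)
           = br (x + u) * br (x - u) * br (y + v) * br (y - v)
             - br (x + v) * br (x - v) * br (y + u) * br (y - u)"
  shows "(\<forall>i<n. rel_holds (Phi br m n) [i, i] [])
       \<and> (\<forall>i<n. \<forall>j<n. i \<noteq> j \<and> \<not> joined m n i j \<longrightarrow> rel_holds (Phi br m n) [i, j] [j, i])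
       \<and> (\<forall>i<n. \<forall>j<n. joined m n i j \<longrightarrow> rel_holds (Phi br m n) [i, j, i] [j, i, j])"
proof -
  have m: "1 \<le> m" "m < n" using assms(1,2) by simp_all
  show ?thesis
    using rel_holds_involution[OF m _ assms(4)] rel_holds_commute[OF m]
      rel_holds_braid[OF m _ assms(4) assms(6)[folded riemann_relation_def]]
    by simp
qed

end
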